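(* Let $n\ge 3$, $0<m<\frac{n-2}{n}$, $\rho>0$, and let $\alpha,\beta$ satisfy $\alpha=\frac{2\beta+\rho}{1-m}$, $\beta>\frac{m\rho}{n-2-mn}$, and $\alpha>n\beta$. Let $v$ be a radially symmetric solution of $$\frac{n-1}{m}\Delta v^m+\alpha v+\beta x\cdot\nabla v=0,\quad v>0,\quad\text{in }\mathbb{R}^n$$ (equivalently, a solution of the corresponding radial ODE on $(0,\infty)$ with $v(0)=\eta>0$, $v'(0)=0$). Then $$\lim_{r\to\infty}r^{n-2}v(r)^m=\infty.$$
   Context: $v(r)$ denotes the value of the radially symmetric function $v$ at any point with $|x|=r$. *)

theory Defs
  imports Complex_Main
begin

end

theory Submission
  imports Defs "HOL-Analysis.Analysis" "HOL-Real_Asymp.Real_Asymp"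
begin

text \<open>Put \<open>w = v^m\<close> and \<open>H = \<alpha> m w + \<beta> r w'\<close>. The equation becomes
\<open>(r^(n-1) w')' = - r^(n-1) v^(1-m) H / (n-1)\<close> and
\<open>H' = (\<alpha> m - (n-2) \<beta>) w' - \<beta> r v^(1-m) H / (n-1)\<close>, and the parameter constraints give
\<open>\<alpha> m < (n-2) \<beta>\<close>. Near the origin the flux \<open>r^(n-1) w'\<close> is \<open>O(r^n)\<close>, so \<open>H\<close> starts at
\<open>\<alpha> m v(0)^m > 0\<close>. At a first zero \<open>r\<^sub>0\<close> of \<open>H\<close> the flux would have decreased from \<open>0\<close>,
forcing \<open>w'(r\<^sub>0) < 0\<close> and hence \<open>H'(r\<^sub>0) > 0\<close>, which is impossible; so \<open>H > 0\<close>.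
Finally \<open>(r^a w)' = r^(a-1) H / \<beta>\<close> for \<open>a = \<alpha> m / \<beta>\<close>, so \<open>w \<ge> w(1) r^(-a)\<close> for \<open>r \<ge> 1\<close>,
and \<open>r^(n-2) w \<ge> w(1) r^(n-2-a)\<close> with \<open>n - 2 - a > 0\<close>.\<close>

lemma fast_diffusion_exponent_gap:
  fixes N m \<rho> \<alpha> \<beta> :: real
  assumes N: "2 < N" and m: "0 < m" "m < (N - 2) / N" and \<rho>: "0 < \<rho>"
    and \<alpha>: "\<alpha> = (2 * \<beta> + \<rho>) / (1 - m)"
    and \<beta>: "m * \<rho> / (N - 2 - m * N) < \<beta>"
  shows "0 < \<beta>" and "\<alpha> * m < (N - 2) * \<beta>"
proof -
  have D: "0 < N - 2 - m * N"
    using m N by (simp add: field_simps)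
  then have "m * \<rho> < \<beta> * (N - 2 - m * N)"
    using \<beta> by (simp add: divide_less_eq mult.commute)
  moreover have "0 < m * \<rho>" using m \<rho> by simp
  ultimately show "0 < \<beta>" using D by (smt (verit) mult_nonpos_nonneg)
  have "m * N < N - 2" using m N by (simp add: less_divide_eq)
  then have m1: "m < 1" using N mult_less_cancel_right_pos[of N m 1] by linarith
  have "\<alpha> * m * (1 - m) = m * (2 * \<beta> + \<rho>)"
    using \<alpha> m1 by simp
  also have "\<dots> < (N - 2) * \<beta> * (1 - m)"
    using \<open>m * \<rho> < \<beta> * (N - 2 - m * N)\<close> by (simp add: algebra_simps)
  finally show "\<alpha> * m < (N - 2) * \<beta>"
    using m1 by simp
qed

lemma scaled_derivative_small_somewhere:
  fixes f f' :: "real \<Rightarrow> real"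
  assumes lim: "(f \<longlongrightarrow> l) (at_right 0)" and r: "0 < r" and d: "0 < d"
    and deriv: "\<And>z. 0 < z \<Longrightarrow> z < r \<Longrightarrow> (f has_real_derivative f' z) (at z)"
  shows "\<exists>z. 0 < z \<and> z < r \<and> z * \<bar>f' z\<bar> < d"
proof (rule ccontr)
  assume "\<not> ?thesis"
  \<comment> \<open>then \<open>f\<close> varies by at least \<open>d / 2\<close> on every \<open>[s / 2, s]\<close>, contradicting the limit\<close>
  then have big: "d \<le> z * \<bar>f' z\<bar>" if "0 < z" "z < r" for z
    using that by force
  have halving: "filterlim (\<lambda>s. s / 2) (at_right 0) (at_right (0::real))"
    by real_asymp
  have "((\<lambda>s. f s - f (s / 2)) \<longlongrightarrow> l - l) (at_right 0)"
    by (intro tendsto_diff lim filterlim_compose[OF lim halving])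
  from tendstoD[OF this, of "d / 2"]
  have "\<forall>\<^sub>F s in at_right 0. \<bar>f s - f (s / 2)\<bar> < d / 2"
    using d by (simp add: dist_real_def)
  moreover have "\<forall>\<^sub>F s in at_right 0. s \<in> {0<..<r}"
    using eventually_at_right_real[OF r] .
  ultimately have "\<forall>\<^sub>F s in at_right (0::real). False"
  proof eventually_elim
    case (elim s)
    obtain z where z: "s / 2 < z" "z < s" "f s - f (s / 2) = (s - s / 2) * f' z"
      using MVT2[of "s / 2" s f f'] deriv elim by force
    have "d / 2 \<le> z / 2 * \<bar>f' z\<bar>"
      using big[of z] z elim by simp
    also have "\<dots> \<le> s / 2 * \<bar>f' z\<bar>"
      using z by (intro mult_right_mono) auto
    also have "\<dots> = \<bar>f s - f (s / 2)\<bar>"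
      using elim by (subst z(3)) (simp add: abs_mult)
    finally show False using elim by simp
  qed
  then show False by simp
qed

lemma positive_on_ray_by_first_zero:
  fixes H H' :: "real \<Rightarrow> real"
  assumes deriv: "\<And>r. 0 < r \<Longrightarrow> (H has_real_derivative H' r) (at r)"
    and near_zero: "\<forall>\<^sub>F r in at_right 0. 0 < H r"
    and at_first_zero: "\<And>r. 0 < r \<Longrightarrow> H r \<le> 0 \<Longrightarrow> (\<And>y. 0 < y \<Longrightarrow> y < r \<Longrightarrow> 0 < H y) \<Longrightarrow> 0 < H' r"
    and r: "0 < r"
  shows "0 < H r"
proof (rule ccontr)
  assume "\<not> 0 < H r"
  obtain b where b: "0 < b" "\<And>y. 0 < y \<Longrightarrow> y < b \<Longrightarrow> 0 < H y"
    using near_zero by (auto simp: eventually_at_right_field)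
  define S where "S = {x \<in> {b / 2..r}. H x \<le> 0}"
  have "r \<in> S"
    using \<open>\<not> 0 < H r\<close> b by (cases "r < b") (auto simp: S_def r)
  have "continuous_on {b / 2..r} H"
    using b by (intro continuous_at_imp_continuous_on ballI DERIV_isCont[OF deriv]) auto
  then have "closed S"
    unfolding S_def by (intro continuous_on_closed_Collect_le continuous_on_const) auto
  moreover have "bdd_below S"
    unfolding S_def by (rule bdd_belowI[of _ "b / 2"]) auto
  ultimately have "Inf S \<in> S"
    using closed_contains_Inf \<open>r \<in> S\<close> by blast
  define r0 where "r0 = Inf S"
  have r0: "b / 2 \<le> r0" "H r0 \<le> 0"
    using \<open>Inf S \<in> S\<close> by (auto simp: S_def r0_def)
  have left: "0 < H y" if "0 < y" "y < r0" for y
  proof (rule ccontr)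
    assume "\<not> 0 < H y"
    with b that r0 have "y \<in> S"
      using \<open>Inf S \<in> S\<close> by (cases "y < b") (auto simp: S_def r0_def)
    then have "r0 \<le> y"
      unfolding r0_def using \<open>bdd_below S\<close> by (rule cInf_lower)
    with that show False by simp
  qed
  have "0 < r0" using r0 b by simp
  then obtain \<delta> where "0 < \<delta>" "\<And>h. 0 < h \<Longrightarrow> h < \<delta> \<Longrightarrow> H (r0 - h) < H r0"
    using DERIV_pos_inc_left[OF deriv at_first_zero] r0 left by blast
  then have "H (r0 - min \<delta> r0 / 2) < H r0"
    using \<open>0 < r0\<close> by simp
  moreover have "0 < H (r0 - min \<delta> r0 / 2)"
    using left \<open>0 < \<delta>\<close> \<open>0 < r0\<close> by simp
  ultimately show False using r0 by simp
qed

locale radial_profile =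
  fixes n :: nat and m \<alpha> \<beta> :: real and v v' w' w'' :: "real \<Rightarrow> real"
  assumes dim: "3 \<le> n"
    and m_pos: "0 < m" and beta_pos: "0 < \<beta>"
    and alpha_ge: "real n * \<beta> \<le> \<alpha>"
    and alpha_lt: "\<alpha> * m < (real n - 2) * \<beta>"
    and pos: "\<And>r. 0 \<le> r \<Longrightarrow> 0 < v r"
    and dv: "\<And>r. 0 \<le> r \<Longrightarrow> (v has_real_derivative v' r) (at r within {0..})"
    and dw: "\<And>r. 0 < r \<Longrightarrow> ((\<lambda>s. v s powr m) has_real_derivative w' r) (at r)"
    and dw': "\<And>r. 0 < r \<Longrightarrow> (w' has_real_derivative w'' r) (at r)"
    and ode: "\<And>r. 0 < r \<Longrightarrow>
      (real n - 1) / m * (w'' r + (real n - 1) / r * w' r) + \<alpha> * v r + \<beta> * r * v' r = 0"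
begin

definition w :: "real \<Rightarrow> real" where "w r = v r powr m"

definition H :: "real \<Rightarrow> real" where "H r = \<alpha> * m * w r + \<beta> * r * w' r"

definition flux :: "real \<Rightarrow> real" where "flux r = r ^ (n - 1) * w' r"

text \<open>The correction term cancels the \<open>v'\<close> contribution to the derivative of the flux,
leaving a derivative of fixed sign controlled by \<open>v\<close> alone.\<close>

definition corrected_flux :: "real \<Rightarrow> real"
  where "corrected_flux r = flux r + m * \<beta> / (real n - 1) * r ^ n * v r"

lemma n_minus_one_pos: "0 < real n - 1"
  using dim by simp

lemma alpha_pos: "0 < \<alpha>"
proof -
  have "0 < real n * \<beta>" using beta_pos dim by simp
  then show ?thesis using alpha_ge by linarith
qed

lemma v_deriv: "0 < r \<Longrightarrow> (v has_real_derivative v' r) (at r)"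
proof -
  assume r: "0 < r"
  have "(v has_real_derivative v' r) (at r within {0<..})"
    using r by (intro has_field_derivative_subset[OF dv]) auto
  moreover have "at r within {0<..} = at r"
    using r by (intro at_within_open) auto
  ultimately show ?thesis by simp
qed

lemma w_deriv: "0 < r \<Longrightarrow> (w has_real_derivative w' r) (at r)"
  using dw unfolding w_def[abs_def] .

lemma w'_eq: "0 < r \<Longrightarrow> w' r = m * v r powr (m - 1) * v' r"
  using DERIV_unique[OF dw DERIV_fun_powr[OF v_deriv pos]] by simp

lemma powr_times_H: "0 < r \<Longrightarrow> v r powr (1 - m) * H r = m * (\<alpha> * v r + \<beta> * r * v' r)"
proof -
  assume "0 < r"
  then have "v r powr (1 - m) * w r = v r" "v r powr (1 - m) * w' r = m * v' r"
    using pos[of r] by (simp_all add: w_def w'_eq powr_add[symmetric] mult.left_commute)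
  then show ?thesis
    unfolding H_def by (simp add: algebra_simps)
qed

lemma radial_laplacian_w:
  "0 < r \<Longrightarrow> w'' r + (real n - 1) / r * w' r = - (v r powr (1 - m) * H r) / (real n - 1)"
proof -
  assume r: "0 < r"
  define X where "X = w'' r + (real n - 1) / r * w' r"
  have "(real n - 1) / m * X = - (\<alpha> * v r + \<beta> * r * v' r)"
    using ode[OF r] unfolding X_def by linarith
  then have "X = - (m * (\<alpha> * v r + \<beta> * r * v' r)) / (real n - 1)"
    using m_pos n_minus_one_pos by (auto simp: field_simps)
  then show ?thesis
    using powr_times_H[OF r] unfolding X_def by simp
qed

lemma H_deriv:
  "0 < r \<Longrightarrow> (H has_real_derivative
     (\<alpha> * m - (real n - 2) * \<beta>) * w' r - \<beta> * r * v r powr (1 - m) * H r / (real n - 1)) (at r)"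
proof -
  assume r: "0 < r"
  have "(H has_real_derivative \<alpha> * m * w' r + \<beta> * w' r + \<beta> * (r * w'' r)) (at r)"
    unfolding H_def[abs_def]
    by (auto intro!: derivative_eq_intros w_deriv dw' r simp: algebra_simps)
  moreover have "r * w'' r = - (r * v r powr (1 - m) * H r) / (real n - 1) - (real n - 1) * w' r"
    using radial_laplacian_w[OF r] r n_minus_one_pos by (simp add: field_simps)
  ultimately show ?thesis
    using n_minus_one_pos by (simp add: field_simps)
qed

lemma flux_deriv:
  "0 < r \<Longrightarrow> (flux has_real_derivative - (r ^ (n - 1) * (v r powr (1 - m) * H r) / (real n - 1))) (at r)"
proof -
  assume r: "0 < r"
  have "(flux has_real_derivative real (n - 1) * r ^ (n - 1 - 1) * w' r + r ^ (n - 1) * w'' r) (at r)"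
    unfolding flux_def[abs_def] using DERIV_mult[OF DERIV_pow dw'[OF r], of "n - 1"]
    by (simp add: ac_simps)
  moreover have "real (n - 1) * r ^ (n - 1 - 1) * w' r = r ^ (n - 1) * ((real n - 1) / r * w' r)"
  proof -
    have "r ^ (n - 1) = r * r ^ (n - 1 - 1)"
      using dim power_minus_mult[of "n - 1" r] by (simp add: mult.commute)
    then show ?thesis
      using r dim by (simp add: of_nat_diff)
  qed
  ultimately have "(flux has_real_derivative r ^ (n - 1) * (w'' r + (real n - 1) / r * w' r)) (at r)"
    by (simp only: distrib_left add.commute)
  then show ?thesis
    unfolding radial_laplacian_w[OF r] by simp
qed

lemma corrected_flux_deriv:
  "0 < r \<Longrightarrow> (corrected_flux has_real_derivative
     - (m * (\<alpha> - real n * \<beta>) / (real n - 1) * r ^ (n - 1) * v r)) (at r)"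
proof -
  assume r: "0 < r"
  define N1 where "N1 = real n - 1"
  have N1: "N1 \<noteq> 0" "real n = N1 + 1"
    using n_minus_one_pos by (auto simp: N1_def)
  have "(corrected_flux has_real_derivative
      - (r ^ (n - 1) * (v r powr (1 - m) * H r) / N1)
      + (m * \<beta> / N1 * (real n * r ^ (n - 1)) * v r + v' r * (m * \<beta> / N1 * r ^ n))) (at r)"
    unfolding corrected_flux_def[abs_def] N1_def
    using DERIV_add[OF flux_deriv[OF r] DERIV_mult[OF DERIV_cmult[where c = "m * \<beta> / (real n - 1)", OF DERIV_pow[of n r]] v_deriv[OF r]]]
    by simp
  moreover have "r ^ n = r * r ^ (n - 1)"
    using dim power_minus_mult[of n r] by (simp add: mult.commute)
  then have "- (r ^ (n - 1) * (v r powr (1 - m) * H r) / N1)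
      + (m * \<beta> / N1 * (real n * r ^ (n - 1)) * v r + v' r * (m * \<beta> / N1 * r ^ n))
    = - (m * (\<alpha> - real n * \<beta>) / N1 * r ^ (n - 1) * v r)"
    unfolding powr_times_H[OF r] N1(2) using N1(1) by (simp add: field_simps)
  ultimately show ?thesis
    by (simp add: N1_def)
qed

lemma v_bounded_on_unit_interval: "\<exists>B. \<forall>s. 0 \<le> s \<longrightarrow> s \<le> 1 \<longrightarrow> v s \<le> B"
proof -
  have "continuous_on {0..1} v"
    using DERIV_continuous_on[of "{0..}" v v'] dv by (auto intro: continuous_on_subset)
  then obtain x where "\<forall>y\<in>{0..1}. v y \<le> v x"
    using continuous_attains_sup[of "{0..1::real}" v] by auto
  then show ?thesis by (intro exI[of _ "v x"]) auto
qed

lemma corrected_flux_oscillation: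
  "\<exists>C\<ge>0. \<forall>s r. 0 < s \<longrightarrow> s < r \<longrightarrow> r \<le> 1 \<longrightarrow> \<bar>corrected_flux r - corrected_flux s\<bar> \<le> C * r ^ n"
proof -
  define k where "k = m * (\<alpha> - real n * \<beta>) / (real n - 1)"
  have k: "0 \<le> k"
    using m_pos alpha_ge n_minus_one_pos by (simp add: k_def)
  obtain B where B: "\<And>s. 0 \<le> s \<Longrightarrow> s \<le> 1 \<Longrightarrow> v s \<le> B"
    using v_bounded_on_unit_interval by blast
  have "0 \<le> B" using B[of 0] pos[of 0] by simp
  have "\<bar>corrected_flux r - corrected_flux s\<bar> \<le> k * B * r ^ n" if sr: "0 < s" "s < r" "r \<le> 1" for s r
  proof -
    have "\<exists>z>s. z < r \<and> corrected_flux r - corrected_flux s = (r - s) * - (k * z ^ (n - 1) * v z)"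
      unfolding k_def by (rule MVT2[OF sr(2)]) (use corrected_flux_deriv sr in auto)
    then obtain z where z: "s < z" "z < r"
      and mvt: "corrected_flux r - corrected_flux s = (r - s) * - (k * z ^ (n - 1) * v z)"
      by blast
    have nonneg: "0 \<le> k * z ^ (n - 1) * v z"
      using k pos[of z] z sr by simp
    have "\<bar>corrected_flux r - corrected_flux s\<bar> = (r - s) * (k * z ^ (n - 1) * v z)"
      using sr by (simp only: mvt abs_mult[of "r - s"] abs_minus_cancel abs_of_nonneg[OF nonneg])
    also have "\<dots> \<le> r * (k * r ^ (n - 1) * B)"
      using z sr k B[of z] pos[of z] \<open>0 \<le> B\<close>
      by (intro mult_mono mult_left_mono power_mono) auto
    also have "\<dots> = k * B * r ^ n"
      using dim power_minus_mult[of n r] by (simp add: ac_simps)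
    finally show ?thesis .
  qed
  then show ?thesis
    using k \<open>0 \<le> B\<close> by (intro exI[of _ "k * B"]) auto
qed

lemma flux_oscillation:
  "\<exists>K\<ge>0. \<forall>s r. 0 < s \<longrightarrow> s < r \<longrightarrow> r \<le> 1 \<longrightarrow> \<bar>flux r - flux s\<bar> \<le> K * r ^ n"
proof -
  obtain C where C: "0 \<le> C"
    "\<And>s r. 0 < s \<Longrightarrow> s < r \<Longrightarrow> r \<le> 1 \<Longrightarrow> \<bar>corrected_flux r - corrected_flux s\<bar> \<le> C * r ^ n"
    using corrected_flux_oscillation by blast
  obtain B where B: "\<And>s. 0 \<le> s \<Longrightarrow> s \<le> 1 \<Longrightarrow> v s \<le> B"
    using v_bounded_on_unit_interval by blast
  define c where "c = m * \<beta> / (real n - 1)"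
  have c: "0 \<le> c"
    using m_pos beta_pos n_minus_one_pos by (simp add: c_def)
  have "0 \<le> B" using B[of 0] pos[of 0] by simp
  have "\<bar>flux r - flux s\<bar> \<le> (C + 2 * c * B) * r ^ n" if sr: "0 < s" "s < r" "r \<le> 1" for s r
  proof -
    have "flux r - flux s = (corrected_flux r - corrected_flux s) - c * r ^ n * v r + c * s ^ n * v s"
      by (simp add: corrected_flux_def c_def)
    moreover have "0 \<le> c * r ^ n * v r" "c * r ^ n * v r \<le> c * r ^ n * B"
      using c pos[of r] B[of r] sr by (auto intro: mult_left_mono)
    moreover have "0 \<le> c * s ^ n * v s" "c * s ^ n * v s \<le> c * r ^ n * B"
      using c pos[of s] B[of s] sr \<open>0 \<le> B\<close> by (auto intro!: mult_mono mult_left_mono power_mono)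
    ultimately show ?thesis
      using C(2)[OF sr] by (simp add: algebra_simps)
  qed
  then show ?thesis
    using C(1) c \<open>0 \<le> B\<close> by (intro exI[of _ "C + 2 * c * B"]) auto
qed

lemma w_tendsto_at_right_0: "(w \<longlongrightarrow> w 0) (at_right 0)"
proof -
  have "(v \<longlongrightarrow> v 0) (at 0 within {0..})"
    using DERIV_continuous[OF dv[of 0]] by (simp add: continuous_within)
  then have "(w \<longlongrightarrow> w 0) (at 0 within {0..})"
    unfolding w_def[abs_def] using pos[of 0] by (intro tendsto_powr tendsto_const) auto
  then show ?thesis
    by (rule tendsto_within_subset) auto
qed

lemma flux_bound: "\<exists>K. \<forall>r. 0 < r \<longrightarrow> r \<le> 1 \<longrightarrow> \<bar>flux r\<bar> \<le> K * r ^ n"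
proof -
  obtain K where K: "0 \<le> K"
    "\<And>s r. 0 < s \<Longrightarrow> s < r \<Longrightarrow> r \<le> 1 \<Longrightarrow> \<bar>flux r - flux s\<bar> \<le> K * r ^ n"
    using flux_oscillation by blast
  have "\<bar>flux r\<bar> \<le> 2 * K * r ^ n" if r: "0 < r" "r \<le> 1" for r
  proof (rule ccontr)
    assume big: "\<not> \<bar>flux r\<bar> \<le> 2 * K * r ^ n"
    define d where "d = \<bar>flux r\<bar> - K * r ^ n"
    have "0 < d"
      using big K(1) r by (simp add: d_def)
    then obtain z where z: "0 < z" "z < r" "z * \<bar>w' z\<bar> < d"
      using scaled_derivative_small_somewhere[OF w_tendsto_at_right_0 r(1)] w_deriv by blast
    have "z ^ (n - 1) \<le> z ^ 1"
      using z r dim by (intro power_decreasing) auto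
    then have "\<bar>flux z\<bar> \<le> z * \<bar>w' z\<bar>"
      using z by (simp add: flux_def abs_mult mult_right_mono)
    moreover have "d \<le> \<bar>flux z\<bar>"
      using K(2)[OF z(1,2) r(2)] by (simp add: d_def)
    ultimately show False using z(3) by simp
  qed
  then show ?thesis by blast
qed

lemma flux_and_r_w'_tendsto_0:
  "(flux \<longlongrightarrow> 0) (at_right 0)" "((\<lambda>r. r * w' r) \<longlongrightarrow> 0) (at_right 0)"
proof -
  obtain K where K: "\<And>r. 0 < r \<Longrightarrow> r \<le> 1 \<Longrightarrow> \<bar>flux r\<bar> \<le> K * r ^ n"
    using flux_bound by blast
  have near: "\<forall>\<^sub>F r in at_right 0. r \<in> {0<..<1::real}"
    by (rule eventually_at_right_real) simp
  have "\<forall>\<^sub>F r in at_right 0. norm (flux r) \<le> K * r ^ n"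
    using near by eventually_elim (use K in auto)
  moreover have "((\<lambda>r. K * r ^ n) \<longlongrightarrow> 0) (at_right (0::real))"
    using dim by (intro tendsto_eq_intros) auto
  ultimately show "(flux \<longlongrightarrow> 0) (at_right 0)"
    by (rule Lim_null_comparison)
  have "\<forall>\<^sub>F r in at_right 0. norm (r * w' r) \<le> K * r ^ 2"
    using near
  proof eventually_elim
    case (elim r)
    have e: "n - 1 = (n - 2) + 1" "n = (n - 2) + 2"
      using dim by auto
    have "r ^ (n - 1) = r ^ (n - 2) * r" "r ^ n = r ^ (n - 2) * r ^ 2"
      using power_add[of r "n - 2" 1, folded e(1)] power_add[of r "n - 2" 2, folded e(2)] by simp_all
    then have "r ^ (n - 2) * \<bar>r * w' r\<bar> \<le> r ^ (n - 2) * (K * r ^ 2)"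
      using K[of r] elim by (simp add: flux_def abs_mult ac_simps)
    then show ?case
      using elim by simp
  qed
  moreover have "((\<lambda>r. K * r ^ 2) \<longlongrightarrow> 0) (at_right (0::real))"
    by (intro tendsto_eq_intros) auto
  ultimately show "((\<lambda>r. r * w' r) \<longlongrightarrow> 0) (at_right 0)"
    by (rule Lim_null_comparison)
qed

lemma H_tendsto_at_right_0: "(H \<longlongrightarrow> \<alpha> * m * w 0) (at_right 0)"
proof -
  have "((\<lambda>r. \<alpha> * m * w r + \<beta> * (r * w' r)) \<longlongrightarrow> \<alpha> * m * w 0 + \<beta> * 0) (at_right 0)"
    by (intro tendsto_intros w_tendsto_at_right_0 flux_and_r_w'_tendsto_0)
  then show ?thesis
    by (simp add: H_def[abs_def] mult.assoc)
qed

lemma flux_strictly_decreasing: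
  assumes "0 < s" "s < t" and H_pos: "\<And>y. s < y \<Longrightarrow> y < t \<Longrightarrow> 0 < H y"
  shows "flux t < flux s"
proof (rule DERIV_neg_imp_decreasing_open[OF \<open>s < t\<close>])
  fix x assume "s < x" "x < t"
  then show "\<exists>y. (flux has_real_derivative y) (at x) \<and> y < 0"
    using flux_deriv[of x] H_pos[of x] pos[of x] \<open>0 < s\<close> n_minus_one_pos by force
next
  show "continuous_on {s..t} flux"
    using \<open>0 < s\<close> by (intro continuous_at_imp_continuous_on ballI DERIV_isCont[OF flux_deriv]) auto
qed

lemma H_pos: "0 < r \<Longrightarrow> 0 < H r"
proof (rule positive_on_ray_by_first_zero[OF H_deriv])
  have "0 < \<alpha> * m * w 0"
    using alpha_pos m_pos pos[of 0] by (simp add: w_def)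
  then show "\<forall>\<^sub>F r in at_right 0. 0 < H r"
    by (rule order_tendstoD(1)[OF H_tendsto_at_right_0])
next
  fix r0 :: real
  assume r0: "0 < r0" "H r0 \<le> 0" and left: "\<And>y. 0 < y \<Longrightarrow> y < r0 \<Longrightarrow> 0 < H y"
  have "flux r0 < flux (r0 / 2)"
    using r0 left by (intro flux_strictly_decreasing) auto
  moreover have "flux (r0 / 2) \<le> 0"
  proof (rule tendsto_lowerbound[OF flux_and_r_w'_tendsto_0(1)])
    show "\<forall>\<^sub>F s in at_right 0. flux (r0 / 2) \<le> flux s"
      using eventually_at_right_real[of 0 "r0 / 2"] r0
      by (auto elim!: eventually_mono intro!: less_imp_le flux_strictly_decreasing left)
  qed simp
  ultimately have "r0 ^ (n - 1) * w' r0 < 0"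
    unfolding flux_def by linarith
  then have "w' r0 < 0"
    using r0 by (simp add: mult_less_0_iff)
  moreover have "\<beta> * r0 * v r0 powr (1 - m) * H r0 \<le> 0"
    using beta_pos r0 pos[of r0] by (simp add: mult_nonneg_nonpos)
  ultimately show "0 < (\<alpha> * m - (real n - 2) * \<beta>) * w' r0
      - \<beta> * r0 * v r0 powr (1 - m) * H r0 / (real n - 1)"
    using alpha_lt n_minus_one_pos
    by (smt (verit) divide_nonpos_pos mult_neg_neg)
qed

lemma w_lower_bound: "1 \<le> r \<Longrightarrow> w 1 \<le> r powr (\<alpha> * m / \<beta>) * w r"
proof -
  assume "1 \<le> r"
  define a where "a = \<alpha> * m / \<beta>"
  have "(\<lambda>x. x powr a * w x) 1 \<le> (\<lambda>x. x powr a * w x) r"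
  proof (cases "r = 1")
    case False
    show ?thesis
    proof (rule less_imp_le, rule DERIV_pos_imp_increasing[where f = "\<lambda>x. x powr a * w x"])
      show "1 < r" using \<open>1 \<le> r\<close> False by simp
    next
      fix x :: real assume "1 \<le> x" "x \<le> r"
      have x: "0 < x" using \<open>1 \<le> x\<close> by simp
      have "((\<lambda>x. x powr a * w x) has_real_derivative a * x powr (a - 1) * w x + w' x * x powr a) (at x)"
        by (rule DERIV_mult[OF has_real_derivative_powr[OF x] w_deriv[OF x]])
      moreover have "x powr a = x powr (a - 1) * x"
        using x powr_add[of x "a - 1" 1] by simp
      then have "a * x powr (a - 1) * w x + w' x * x powr a = x powr (a - 1) * (H x / \<beta>)"
        using beta_pos by (simp add: H_def a_def field_simps)
      ultimately have "((\<lambda>x. x powr a * w x) has_real_derivative x powr (a - 1) * (H x / \<beta>)) (at x)"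
        by simp
      moreover have "0 < x powr (a - 1) * (H x / \<beta>)"
        using H_pos[of x] \<open>1 \<le> x\<close> beta_pos by simp
      ultimately show "\<exists>y. ((\<lambda>x. x powr a * w x) has_real_derivative y) (at x) \<and> 0 < y"
        by blast
    qed
  qed simp
  then show ?thesis by (simp add: a_def)
qed

theorem r_pow_w_tendsto_infinity: "filterlim (\<lambda>r. r ^ (n - 2) * v r powr m) at_top at_top"
proof -
  define a where "a = \<alpha> * m / \<beta>"
  have "0 < real n - 2 - a"
    using alpha_lt beta_pos by (simp add: a_def divide_less_eq)
  moreover have "0 < w 1"
    using pos[of 1] by (simp add: w_def)
  ultimately have "filterlim (\<lambda>r. w 1 * r powr (real n - 2 - a)) at_top at_top"
    by (intro filterlim_tendsto_pos_mult_at_top[OF tendsto_const _ real_powr_at_top])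
  moreover have "\<forall>\<^sub>F r in at_top. w 1 * r powr (real n - 2 - a) \<le> r ^ (n - 2) * v r powr m"
    using eventually_ge_at_top[of "1::real"]
  proof eventually_elim
    case (elim r)
    then have "r ^ (n - 2) = r powr (real n - 2 - a) * r powr a"
      using dim by (simp add: powr_realpow[symmetric] flip: powr_add)
    then have "r ^ (n - 2) * v r powr m = r powr (real n - 2 - a) * (r powr a * w r)"
      by (simp add: w_def)
    then show ?case
      using mult_right_mono[OF w_lower_bound[OF elim], of "r powr (real n - 2 - a)"]
      by (simp add: a_def mult.commute)
  qed
  ultimately show ?thesis
    by (rule filterlim_at_top_mono)
qed

end

theorem lemma3p2:
  fixes n :: nat and m \<rho> \<alpha> \<beta> \<eta> :: real
    and v v' w' w'' :: "real \<Rightarrow> real"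
  assumes n: "n \<ge> 3"
    and m_pos: "0 < m" and m_lt: "m < (real n - 2) / real n"
    and rho: "\<rho> > 0"
    and alpha: "\<alpha> = (2 * \<beta> + \<rho>) / (1 - m)"
    and beta: "\<beta> > m * \<rho> / (real n - 2 - m * real n)"
    and alpha_beta: "\<alpha> > real n * \<beta>"
    and pos: "\<And>r. r \<ge> 0 \<Longrightarrow> v r > 0"
    and init: "v 0 = \<eta>" "\<eta> > 0" "v' 0 = 0"
    and dv: "\<And>r. r \<ge> 0 \<Longrightarrow> (v has_real_derivative v' r) (at r within {0..})"
    and dw: "\<And>r. r > 0 \<Longrightarrow> ((\<lambda>s. v s powr m) has_real_derivative w' r) (at r)"
    and dw': "\<And>r. r > 0 \<Longrightarrow> (w' has_real_derivative w'' r) (at r)"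
    and ode: "\<And>r. r > 0 \<Longrightarrow>
      (real n - 1) / m * (w'' r + (real n - 1) / r * w' r) + \<alpha> * v r + \<beta> * r * v' r = 0"
  shows "filterlim (\<lambda>r. r ^ (n - 2) * v r powr m) at_top at_top"
proof -
  have "2 < real n" using n by simp
  note gap = fast_diffusion_exponent_gap[OF this m_pos m_lt rho alpha beta]
  have "radial_profile n m \<alpha> \<beta> v v' w' w''"
    by unfold_locales (use n m_pos gap alpha_beta pos dv dw dw' ode in auto)
  then show ?thesis
    by (rule radial_profile.r_pow_w_tendsto_infinity)
qed

end
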